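(* Let $K\ge2$ and let $H:\mathbb{R}^K\to\mathbb{R}$ satisfy (A1)–(A4) below at $\theta^*\in\Delta_{K-1}$, where the coordinates are labelled so that $\theta^*_1=\dots=\theta^*_m=0$ and $\theta^*_{m+1},\dots,\theta^*_K>0$. Let $\tilde\Delta_{K-1}=\{y\in\mathbb{R}^{K-1}:y_i\ge0,\sum_{i=1}^{K-1}y_i\le1\}$ and $T:\tilde\Delta_{K-1}\to\Delta_{K-1}$, $T(y)=(y_1,\dots,y_{K-1},1-\sum_{i=1}^{K-1}y_i)$. Then there exist $c_1,c_2>0$ such that for all $y\in\tilde\Delta_{K-1}$, $$H(T(y))\le H(\theta^* )-c_1\sum_{i=1}^m|y_i-\theta^*_i|-c_2\sum_{i=m+1}^{K-1}|y_i-\theta^*_i|^2.$$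
   Context: $\Delta_{K-1}=\{\theta\in\mathbb{R}^K:\theta_i\ge0,\sum_i\theta_i=1\}$. With $Z=\{1,\dots,m\}$: (A1) $H$ attains its maximum over $\Delta_{K-1}$ only at $\theta^*$. (A2) $H$ is continuous on $\Delta_{K-1}$ and $C^2$ on an open neighborhood of $\theta^*$ in $\mathbb{R}^K$. There are unique KKT multipliers $\lambda_i\ge0$ ($i\le m$), $\mu\in\mathbb{R}$ with $\nabla H(\theta^* )=-\sum_{i=1}^m\lambda_ie_i+\mu\mathbf{1}_K$. (A3) $\lambda_i>0$ for $i\le m$. (A4) $d^\top\nabla^2H(\theta^* )d<0$ for all nonzero $d\in\mathbb{R}^K$ with $\mathbf{1}_K^\top d=0$ and $d_1=\dots=d_m=0$. *)

theory Defs
  imports "HOL-Analysis.Analysis"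
begin

definition prob_simplex :: "(real^'n) set" where
  "prob_simplex = {\<theta>. (\<forall>i. \<theta> $ i \<ge> 0) \<and> (\<Sum>i\<in>UNIV. \<theta> $ i) = 1}"

definition C2_with :: "(real^'n) set \<Rightarrow> (real^'n \<Rightarrow> real)
    \<Rightarrow> (real^'n \<Rightarrow> ((real^'n) \<Rightarrow>\<^sub>L real))
    \<Rightarrow> (real^'n \<Rightarrow> ((real^'n) \<Rightarrow>\<^sub>L ((real^'n) \<Rightarrow>\<^sub>L real))) \<Rightarrow> bool" where
  "C2_with U H Df D2f \<longleftrightarrow>
     (\<forall>x\<in>U. (H has_derivative blinfun_apply (Df x)) (at x)) \<and>
     (\<forall>x\<in>U. (Df has_derivative blinfun_apply (D2f x)) (at x)) \<and>
     continuous_on U D2f"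

text \<open>Coordinates of R^K are labelled 1..K via a bijection e :: nat => 'n from {1..K}.
  A point y of R^(K-1) is a function nat => real, of which only y 1, ..., y (K-1) matter.\<close>
definition Tmap :: "(nat \<Rightarrow> 'n) \<Rightarrow> nat \<Rightarrow> (nat \<Rightarrow> real) \<Rightarrow> real^'n" where
  "Tmap e K y = (\<chi> j. if j = e K then 1 - (\<Sum>i=1..K-1. y i) else y (inv_into {1..K} e j))"

end

theory Submission
  imports Defs
begin

(* Write d = \<theta> - \<theta>* for \<theta> in the simplex, so that the coordinates of d sum to 0. By the
   KKT conditions the first-order term of H at \<theta>* in direction d is -\<Sum>(i\<le>m) \<lambda>_i \<theta>_i, a
   decrease proportional to the mass s = \<Sum>(i\<le>m) \<theta>_i on the active coordinates. Moving that mass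
   onto the inactive coordinate K splits d = w + u, with w in the critical subspace, where the
   Hessian is uniformly negative definite, and |u| \<le> 2 s. The Hessian terms involving u are
   O(|d| s) and are absorbed by the linear decrease near \<theta>*, so H \<theta> \<le> H \<theta>* - c (s + |w|^2)
   there. Away from \<theta>*, compactness of the simplex and uniqueness of the maximiser give a uniform
   gap, which absorbs the bounded penalty after shrinking c. *)

lemma min_mult_add_le:
  fixes a b s q :: real
  assumes "0 \<le> s" "0 \<le> q"
  shows "min a b * (s + q) \<le> a * s + b * q"
proof -
  have "min a b * s \<le> a * s" "min a b * q \<le> b * q"
    using assms by (intro mult_right_mono; simp)+
  then show ?thesis by (simp add: distrib_left)
qed

lemma abs_blinfun_bilinear_le:
  fixes A :: "'a::real_normed_vector \<Rightarrow>\<^sub>L ('b::real_normed_vector \<Rightarrow>\<^sub>L real)"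
  shows "\<bar>A x y\<bar> \<le> norm A * norm x * norm y"
proof -
  have "\<bar>A x y\<bar> \<le> norm (A x) * norm y" using norm_blinfun[of "A x" y] by simp
  also have "\<dots> \<le> norm A * norm x * norm y"
    by (intro mult_right_mono norm_blinfun) auto
  finally show ?thesis .
qed

lemma blinfun_quadratic_perturb_le:
  fixes A B :: "'a::real_normed_vector \<Rightarrow>\<^sub>L ('a \<Rightarrow>\<^sub>L real)"
  shows "B v v \<le> A v v + norm (B - A) * (norm v)\<^sup>2"
proof -
  have "B v v - A v v = (B - A) v v" by (simp add: blinfun.diff_left)
  also have "\<dots> \<le> norm (B - A) * (norm v)\<^sup>2"
    using abs_blinfun_bilinear_le[of "B - A" v v] by (simp add: power2_eq_square mult.assoc)
  finally show ?thesis by simp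
qed

lemma blinfun_quadratic_add_le:
  fixes B :: "'a::real_normed_vector \<Rightarrow>\<^sub>L ('a \<Rightarrow>\<^sub>L real)"
  shows "B (w + u) (w + u) \<le> B w w + norm B * norm u * (2 * norm w + norm u)"
proof -
  have "B (w + u) (w + u) = B w w + B w u + B u w + B u u"
    by (simp add: blinfun.add_left blinfun.add_right)
  moreover have "\<bar>B w u\<bar> \<le> norm B * norm w * norm u" "\<bar>B u w\<bar> \<le> norm B * norm u * norm w"
    "\<bar>B u u\<bar> \<le> norm B * norm u * norm u"
    by (rule abs_blinfun_bilinear_le)+
  ultimately show ?thesis by (simp add: algebra_simps)
qed

lemma blinfun_quadratic_le_near_negative_vector:
  fixes B :: "'a::real_normed_vector \<Rightarrow>\<^sub>L ('a \<Rightarrow>\<^sub>L real)"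
  assumes w: "B w w \<le> - \<kappa> * (norm w)\<^sup>2" and "norm B \<le> M"
    and dw: "norm (d - w) \<le> 2 * s" and s: "s \<le> c * norm d" "0 \<le> c"
  shows "B d d \<le> - \<kappa> * (norm w)\<^sup>2 + 4 * M * (1 + 3 * c) * norm d * s"
proof -
  let ?u = "d - w"
  have "s \<ge> 0" using dw norm_ge_zero[of ?u] by linarith
  have "M \<ge> 0" using \<open>norm B \<le> M\<close> norm_ge_zero[of B] by linarith
  have "norm w \<le> norm d + norm ?u" using norm_triangle_ineq4[of d ?u] by simp
  then have "2 * norm w + norm ?u \<le> 2 * (norm d + 3 * s)" using dw by (simp add: algebra_simps)
  then have "norm ?u * (2 * norm w + norm ?u) \<le> (2 * s) * (2 * (norm d + 3 * s))"
    using dw \<open>s \<ge> 0\<close> by (intro mult_mono) auto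
  also have "\<dots> \<le> (2 * s) * (2 * (1 + 3 * c) * norm d)"
    using s \<open>s \<ge> 0\<close> by (intro mult_left_mono) (auto simp: algebra_simps)
  finally have "norm B * (norm ?u * (2 * norm w + norm ?u)) \<le> M * ((2 * s) * (2 * (1 + 3 * c) * norm d))"
    using \<open>M \<ge> 0\<close> by (intro mult_mono[OF \<open>norm B \<le> M\<close>]) auto
  moreover have "B d d \<le> B w w + norm B * norm ?u * (2 * norm w + norm ?u)"
    using blinfun_quadratic_add_le[of B w ?u] by simp
  ultimately show ?thesis using w by (simp add: algebra_simps)
qed

lemma subspace_negative_definite_uniform:
  fixes A :: "'a::euclidean_space \<Rightarrow>\<^sub>L ('a \<Rightarrow>\<^sub>L real)"
  assumes S: "subspace S" and neg: "\<And>v. v \<in> S \<Longrightarrow> v \<noteq> 0 \<Longrightarrow> A v v < 0"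
  obtains \<kappa> where "\<kappa> > 0" "\<forall>v\<in>S. A v v \<le> - \<kappa> * (norm v)\<^sup>2"
proof (cases "S \<inter> sphere 0 1 = {}")
  case True
  have "v = 0" if "v \<in> S" for v
  proof (rule ccontr)
    assume "v \<noteq> 0"
    then have "(1 / norm v) *\<^sub>R v \<in> S \<inter> sphere 0 1"
      using subspace_scale[OF S that] by auto
    with True show False by blast
  qed
  then have "S \<subseteq> {0}" by blast
  then show ?thesis by (intro that[of 1]) auto
next
  case False
  let ?q = "\<lambda>v. A v v"
  have "compact (S \<inter> sphere 0 1)"
    using closed_subspace[OF S] by (intro closed_Int_compact) auto
  moreover have "continuous_on (S \<inter> sphere 0 1) ?q"
    by (intro continuous_intros)
  ultimately obtain v0 where v0: "v0 \<in> S \<inter> sphere 0 1"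
    and max: "\<And>v. v \<in> S \<inter> sphere 0 1 \<Longrightarrow> ?q v \<le> ?q v0"
    using continuous_attains_sup[OF _ False] by blast
  show ?thesis
  proof (rule that[of "- ?q v0"])
    have "v0 \<noteq> 0" using v0 by auto
    with v0 show "0 < - ?q v0" using neg by auto
    show "\<forall>v\<in>S. ?q v \<le> - (- ?q v0) * (norm v)\<^sup>2"
    proof (intro ballI)
      fix v assume v: "v \<in> S"
      show "?q v \<le> - (- ?q v0) * (norm v)\<^sup>2"
      proof (cases "v = 0")
        case False
        let ?u = "(1 / norm v) *\<^sub>R v"
        have "?u \<in> S \<inter> sphere 0 1" using subspace_scale[OF S v] False by auto
        then have "?q ?u \<le> ?q v0" by (rule max)
        moreover have "?q ?u = ?q v / (norm v)\<^sup>2"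
          by (simp add: blinfun.scaleR_left blinfun.scaleR_right power2_eq_square)
        ultimately show ?thesis using False by (simp add: divide_le_eq mult.commute)
      qed simp
    qed
  qed
qed

lemma negative_definite_near:
  fixes A :: "'b::metric_space \<Rightarrow> ('a::real_normed_vector \<Rightarrow>\<^sub>L ('a \<Rightarrow>\<^sub>L real))"
  assumes "isCont A x0" "\<kappa> > 0" and neg: "\<forall>v\<in>S. A x0 v v \<le> - \<kappa> * (norm v)\<^sup>2"
  obtains r where "r > 0" "\<forall>p. dist p x0 < r \<longrightarrow>
    (\<forall>v\<in>S. A p v v \<le> - (\<kappa> / 2) * (norm v)\<^sup>2) \<and> norm (A p) \<le> norm (A x0) + \<kappa> / 2"
proof -
  obtain r where "r > 0" and r: "\<forall>p. dist p x0 < r \<longrightarrow> norm (A p - A x0) < \<kappa> / 2"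
    using assms(1,2) half_gt_zero unfolding continuous_at_eps_delta dist_norm by blast
  show ?thesis
  proof (rule that[OF \<open>r > 0\<close>], intro allI impI conjI ballI)
    fix p v assume "dist p x0 < r" "v \<in> S"
    then have "A p v v \<le> - \<kappa> * (norm v)\<^sup>2 + \<kappa> / 2 * (norm v)\<^sup>2"
      using r neg blinfun_quadratic_perturb_le[of "A p" v "A x0"]
        mult_right_mono[of "norm (A p - A x0)" "\<kappa> / 2" "(norm v)\<^sup>2"]
      by fastforce
    then show "A p v v \<le> - (\<kappa> / 2) * (norm v)\<^sup>2" by simp
  next
    fix p assume "dist p x0 < r"
    then show "norm (A p) \<le> norm (A x0) + \<kappa> / 2"
      using r norm_triangle_ineq2[of "A p" "A x0"] by fastforce
  qed
qed

lemma compact_strict_upper_bound_gap: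
  fixes f :: "'a::topological_space \<Rightarrow> real"
  assumes "compact S" "continuous_on S f" "\<And>x. x \<in> S \<Longrightarrow> f x < c"
  obtains \<delta> where "\<delta> > 0" "\<forall>x\<in>S. f x \<le> c - \<delta>"
proof (cases "S = {}")
  case False
  then obtain x0 where "x0 \<in> S" "\<forall>x\<in>S. f x \<le> f x0"
    using continuous_attains_sup[OF assms(1) False assms(2)] by blast
  with assms(3) show ?thesis by (intro that[of "c - f x0"]) auto
qed (auto intro: that[of 1])

lemma local_to_global_upper_bound:
  fixes H P :: "'a::metric_space \<Rightarrow> real"
  assumes C: "compact C" "x0 \<in> C" and cont: "continuous_on C H" "continuous_on C P"
    and unique_max: "\<And>x. x \<in> C \<Longrightarrow> x \<noteq> x0 \<Longrightarrow> H x < H x0"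
    and P_nonneg: "\<And>x. x \<in> C \<Longrightarrow> 0 \<le> P x"
    and "r > 0" "a > 0" and near: "\<And>x. x \<in> C \<Longrightarrow> dist x x0 < r \<Longrightarrow> H x \<le> H x0 - a * P x"
  obtains c where "c > 0" "\<And>x. x \<in> C \<Longrightarrow> H x \<le> H x0 - c * P x"
proof -
  define far where "far = C \<inter> {x. r \<le> dist x x0}"
  have "compact far"
    unfolding far_def using C by (intro compact_Int_closed closed_Collect_le continuous_intros)
  moreover have "continuous_on far H" using cont(1) by (rule continuous_on_subset) (auto simp: far_def)
  moreover have "H x < H x0" if "x \<in> far" for x
    using that \<open>r > 0\<close> by (intro unique_max) (auto simp: far_def)
  ultimately obtain \<delta> where \<delta>: "\<delta> > 0" "\<forall>x\<in>far. H x \<le> H x0 - \<delta>"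
    by (rule compact_strict_upper_bound_gap)
  obtain xm where xm: "xm \<in> C" "\<And>x. x \<in> C \<Longrightarrow> P x \<le> P xm"
    using continuous_attains_sup[OF C(1) _ cont(2)] C(2) by blast
  define B where "B = P xm + 1"
  have B: "B > 0" "\<And>x. x \<in> C \<Longrightarrow> P x \<le> B"
    using P_nonneg[OF xm(1)] xm(2) by (force simp: B_def)+
  show ?thesis
  proof (rule that[of "min a (\<delta> / B)"])
    show "0 < min a (\<delta> / B)" using \<open>a > 0\<close> \<delta>(1) B(1) by simp
    fix x assume x: "x \<in> C"
    show "H x \<le> H x0 - min a (\<delta> / B) * P x"
    proof (cases "dist x x0 < r")
      case True
      have "min a (\<delta> / B) * P x \<le> a * P x" using P_nonneg[OF x] by (intro mult_right_mono) auto
      with near[OF x True] show ?thesis by linarith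
    next
      case False
      have "min a (\<delta> / B) * P x \<le> \<delta> / B * B"
        using P_nonneg[OF x] B \<delta>(1) x by (intro mult_mono) auto
      moreover have "H x \<le> H x0 - \<delta>" using \<delta>(2) x False by (simp add: far_def)
      ultimately show ?thesis using B(1) by simp
    qed
  qed
qed

lemma C2_with_Taylor2:
  fixes H :: "real^'n \<Rightarrow> real"
  assumes C2: "C2_with U H Df D2f" and seg: "\<And>t. t \<in> {0..1} \<Longrightarrow> x + t *\<^sub>R d \<in> U"
  obtains t where "t \<in> {0..1}" "H (x + d) = H x + Df x d + 1/2 * D2f (x + t *\<^sub>R d) d d"
proof -
  define g where "g = (\<lambda>t::real. H (x + t *\<^sub>R d))"
  define g1 where "g1 = (\<lambda>t::real. Df (x + t *\<^sub>R d) d)"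
  define g2 where "g2 = (\<lambda>t::real. D2f (x + t *\<^sub>R d) d d)"
  define diff where "diff = (\<lambda>k::nat. if k = 0 then g else if k = 1 then g1 else g2)"
  have line: "((\<lambda>t::real. x + t *\<^sub>R d) has_derivative (\<lambda>h. h *\<^sub>R d)) (at t)" for t
    by (auto intro!: derivative_eq_intros)
  have "DERIV g t :> g1 t" if "t \<in> {0..1}" for t
  proof -
    have "(H has_derivative Df (x + t *\<^sub>R d)) (at (x + t *\<^sub>R d))"
      using C2 seg[OF that] unfolding C2_with_def by auto
    from diff_chain_at[OF line this]
    have "(g has_derivative (\<lambda>h. Df (x + t *\<^sub>R d) (h *\<^sub>R d))) (at t)"
      unfolding g_def o_def by simp
    then show ?thesis
      by (rule has_derivative_imp_has_field_derivative) (simp add: g1_def blinfun.scaleR_right)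
  qed
  moreover have "DERIV g1 t :> g2 t" if "t \<in> {0..1}" for t
  proof -
    have "(Df has_derivative D2f (x + t *\<^sub>R d)) (at (x + t *\<^sub>R d))"
      using C2 seg[OF that] unfolding C2_with_def by auto
    from diff_chain_at[OF line this]
    have "((\<lambda>t. Df (x + t *\<^sub>R d)) has_derivative (\<lambda>h. D2f (x + t *\<^sub>R d) (h *\<^sub>R d))) (at t)"
      unfolding o_def by simp
    then have "(g1 has_derivative (\<lambda>h. D2f (x + t *\<^sub>R d) (h *\<^sub>R d) d)) (at t)"
      unfolding g1_def by (auto intro!: derivative_eq_intros)
    then show ?thesis
      by (rule has_derivative_imp_has_field_derivative)
        (simp add: g2_def blinfun.scaleR_right blinfun.scaleR_left)
  qed
  ultimately have "\<forall>k t. k < 2 \<and> 0 \<le> t \<and> t \<le> 1 \<longrightarrow> DERIV (diff k) t :> diff (Suc k) t"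
    by (auto simp: diff_def less_2_cases_iff)
  from Taylor_up[of 2 diff g 0 1 0, OF _ _ this] obtain t where
    "0 < t" "t < 1" "g 1 = (\<Sum>k<2. diff k 0 / fact k * (1 - 0) ^ k) + diff 2 t / fact 2 * (1 - 0) ^ 2"
    by (auto simp: diff_def)
  then show ?thesis
    by (intro that[of t]) (auto simp: g_def g1_def g2_def diff_def numeral_2_eq_2)
qed

lemma blinfun_apply_cart_basis_expansion:
  fixes f :: "(real^'n) \<Rightarrow>\<^sub>L real"
  shows "f d = (\<Sum>j\<in>UNIV. d $ j * f (axis j 1))"
proof -
  have "f d = f (\<Sum>j\<in>UNIV. d $ j *\<^sub>R axis j 1)"
    using basis_expansion[of d] by (simp add: scalar_mult_eq_scaleR)
  then show ?thesis by (simp add: blinfun.sum_right blinfun.scaleR_right)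
qed

lemma vec_move_mass_to_coordinate:
  fixes d :: "real^'n" and J :: "'n set"
  assumes "k \<notin> J"
  obtains w where "\<forall>j\<in>J. w $ j = 0" "\<forall>l. l \<notin> J \<and> l \<noteq> k \<longrightarrow> w $ l = d $ l"
    "(\<Sum>l\<in>UNIV. w $ l) = (\<Sum>l\<in>UNIV. d $ l)" "norm (d - w) \<le> 2 * (\<Sum>j\<in>J. \<bar>d $ j\<bar>)"
proof -
  define u where "u = (\<Sum>j\<in>J. d $ j *\<^sub>R (axis j 1 - axis k (1::real)))"
  have u_nth: "u $ l = (if l \<in> J then d $ l else 0) - (if l = k then (\<Sum>j\<in>J. d $ j) else 0)" for l
    using assms by (auto simp: u_def axis_def algebra_simps sum_subtractf if_distrib[of "(*) _"]
        sum.delta eq_commute[of l] cong: if_cong)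
  show ?thesis
  proof (rule that[of "d - u"])
    have "(\<Sum>l\<in>UNIV. u $ l) = 0"
      by (simp add: u_nth sum_subtractf sum.If_cases)
    then show "(\<Sum>l\<in>UNIV. (d - u) $ l) = (\<Sum>l\<in>UNIV. d $ l)"
      by (simp add: sum_subtractf)
    have "norm u \<le> (\<Sum>j\<in>J. norm (d $ j *\<^sub>R (axis j 1 - axis k (1::real))))"
      unfolding u_def by (rule norm_sum)
    also have "\<dots> \<le> (\<Sum>j\<in>J. \<bar>d $ j\<bar> * 2)"
    proof (rule sum_mono)
      fix j
      have "norm (axis j 1 - axis k (1::real)) \<le> norm (axis j (1::real)) + norm (axis k (1::real))"
        by (rule norm_triangle_ineq4)
      then show "norm (d $ j *\<^sub>R (axis j 1 - axis k (1::real))) \<le> \<bar>d $ j\<bar> * 2"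
        by (simp add: mult_left_mono)
    qed
    finally show "norm (d - (d - u)) \<le> 2 * (\<Sum>j\<in>J. \<bar>d $ j\<bar>)"
      by (simp add: sum_distrib_left mult.commute)
  qed (use assms in \<open>auto simp: u_nth\<close>)
qed

lemma sum_nth_squares_le_norm_squared:
  fixes x :: "real^'n"
  shows "(\<Sum>j\<in>J. (x $ j)\<^sup>2) \<le> (norm x)\<^sup>2"
proof -
  have "(\<Sum>j\<in>J. (x $ j)\<^sup>2) \<le> (\<Sum>j\<in>UNIV. (x $ j)\<^sup>2)" by (rule sum_mono2) auto
  also have "\<dots> = (norm x)\<^sup>2" by (simp add: norm_vec_def L2_set_def sum_nonneg)
  finally show ?thesis .
qed

lemma compact_prob_simplex: "compact (prob_simplex :: (real^'n) set)"
proof -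
  have "prob_simplex = (\<Inter>i. {\<theta>::real^'n. \<theta> $ i \<ge> 0}) \<inter> {\<theta>. (\<Sum>i\<in>UNIV. \<theta> $ i) = 1}"
    unfolding prob_simplex_def by auto
  moreover have "closed \<dots>"
    by (intro closed_Int closed_INT ballI closed_Collect_le closed_Collect_eq continuous_intros)
  ultimately have "closed (prob_simplex :: (real^'n) set)" by simp
  moreover have "bounded (prob_simplex :: (real^'n) set)" unfolding bounded_iff
  proof (intro exI[of _ 1] ballI)
    fix x :: "real^'n" assume "x \<in> prob_simplex"
    then have "(\<Sum>i\<in>UNIV. \<bar>x $ i\<bar>) = 1" unfolding prob_simplex_def by simp
    then show "norm x \<le> 1" using norm_le_l1_cart[of x] by simp
  qed
  ultimately show ?thesis by (simp add: compact_eq_bounded_closed)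
qed

lemma prob_simplex_zero_prefix_less:
  fixes e :: "nat \<Rightarrow> 'n::finite" and K m :: nat
  assumes e: "bij_betw e {1..K} UNIV" and "\<theta> \<in> prob_simplex" and "\<forall>i\<in>{1..m}. \<theta> $ e i = 0"
  shows "m < K"
proof (rule ccontr)
  assume "\<not> m < K"
  then have "(\<Sum>i\<in>{1..K}. \<theta> $ e i) = 0" using assms(3) by simp
  moreover have "(\<Sum>i\<in>{1..K}. \<theta> $ e i) = (\<Sum>j\<in>UNIV. \<theta> $ j)"
    by (rule sum.reindex_bij_betw[OF e])
  ultimately show False using assms(2) by (simp add: prob_simplex_def)
qed

lemma Tmap_nth:
  assumes e: "bij_betw e {1..K} UNIV" and i: "i \<in> {1..K-1}"
  shows "Tmap e K y $ e i = y i"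
proof -
  have inj: "inj_on e {1..K}" using e by (rule bij_betw_imp_inj_on)
  have "i \<in> {1..K}" "K \<in> {1..K}" "i \<noteq> K" using i by auto
  then have "e i \<noteq> e K" using inj_on_contraD[OF inj] by blast
  moreover have "inv_into {1..K} e (e i) = i" using inj \<open>i \<in> {1..K}\<close> by simp
  ultimately show ?thesis unfolding Tmap_def by simp
qed

lemma Tmap_in_prob_simplex:
  assumes e: "bij_betw e {1..K} UNIV" and "K \<ge> 1"
    and y: "\<forall>i\<in>{1..K-1}. y i \<ge> 0" "(\<Sum>i=1..K-1. y i) \<le> 1"
  shows "Tmap e K y \<in> prob_simplex"
proof -
  let ?\<theta> = "Tmap e K y"
  have last: "?\<theta> $ e K = 1 - (\<Sum>i=1..K-1. y i)" unfolding Tmap_def by simp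
  have split: "{1..K} = insert K {1..K-1}" using \<open>K \<ge> 1\<close> by auto
  have "(\<Sum>j\<in>UNIV. ?\<theta> $ j) = (\<Sum>i\<in>{1..K}. ?\<theta> $ e i)"
    by (rule sum.reindex_bij_betw[OF e, symmetric])
  also have "\<dots> = ?\<theta> $ e K + (\<Sum>i=1..K-1. ?\<theta> $ e i)"
    unfolding split using \<open>K \<ge> 1\<close> by simp
  also have "(\<Sum>i=1..K-1. ?\<theta> $ e i) = (\<Sum>i=1..K-1. y i)"
    using Tmap_nth[OF e] by simp
  finally have "(\<Sum>j\<in>UNIV. ?\<theta> $ j) = 1" using last by simp
  moreover have "?\<theta> $ j \<ge> 0" for j
  proof -
    obtain i where i: "i \<in> {1..K}" "j = e i" using bij_betw_imp_surj_on[OF e] by blast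
    then show ?thesis
      using last y Tmap_nth[OF e, of i y] by (cases "i = K") auto
  qed
  ultimately show ?thesis unfolding prob_simplex_def by simp
qed

lemma KKT_gradient_apply_tangent:
  fixes f :: "(real^'n) \<Rightarrow>\<^sub>L real" and e :: "nat \<Rightarrow> 'n" and K m :: nat
  assumes e: "bij_betw e {1..K} UNIV" and "m \<le> K"
    and active: "\<forall>i\<in>{1..m}. f (axis (e i) 1) = - lam i + \<mu>"
    and inactive: "\<forall>i\<in>{m+1..K}. f (axis (e i) 1) = \<mu>"
    and tangent: "(\<Sum>j\<in>UNIV. d $ j) = 0"
  shows "f d = - (\<Sum>i=1..m. lam i * d $ e i)"
proof -
  have "f d = (\<Sum>i\<in>{1..K}. d $ e i * f (axis (e i) 1))"
    unfolding blinfun_apply_cart_basis_expansion[of f d]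
    by (rule sum.reindex_bij_betw[OF e, symmetric])
  also have "\<dots> = (\<Sum>i\<in>{1..K}. \<mu> * d $ e i - (if i \<le> m then lam i * d $ e i else 0))"
    using active inactive by (intro sum.cong) (auto simp: algebra_simps)
  also have "\<dots> = \<mu> * (\<Sum>j\<in>UNIV. d $ j) - (\<Sum>i=1..m. lam i * d $ e i)"
  proof -
    have "{1..K} \<inter> {i. i \<le> m} = {1..m}" using \<open>m \<le> K\<close> by auto
    moreover have "(\<Sum>i\<in>{1..K}. d $ e i) = (\<Sum>j\<in>UNIV. d $ j)"
      by (rule sum.reindex_bij_betw[OF e])
    ultimately show ?thesis by (simp add: sum_subtractf sum_distrib_left[symmetric] sum.If_cases)
  qed
  finally show ?thesis using tangent by simp
qed

lemma tangent_split_active_coordinates: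
  fixes d :: "real^'n" and e :: "nat \<Rightarrow> 'n" and K m :: nat
  assumes e: "bij_betw e {1..K} UNIV" and "m < K"
    and tangent: "(\<Sum>j\<in>UNIV. d $ j) = 0" and active: "\<forall>i\<in>{1..m}. d $ e i \<ge> 0"
  obtains w where "(\<Sum>j\<in>UNIV. w $ j) = 0" "\<forall>i\<in>{1..m}. w $ e i = 0"
    "\<forall>i\<in>{m+1..K-1}. w $ e i = d $ e i" "norm (d - w) \<le> 2 * (\<Sum>i=1..m. d $ e i)"
proof -
  have inj: "inj_on e {1..K}" using e by (rule bij_betw_imp_inj_on)
  have "e K \<notin> e ` {1..m}" using \<open>m < K\<close> inj_onD[OF inj, of K] by fastforce
  then obtain w where w: "\<forall>j\<in>e ` {1..m}. w $ j = 0"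
    "\<forall>l. l \<notin> e ` {1..m} \<and> l \<noteq> e K \<longrightarrow> w $ l = d $ l"
    "(\<Sum>l\<in>UNIV. w $ l) = (\<Sum>l\<in>UNIV. d $ l)" "norm (d - w) \<le> 2 * (\<Sum>j\<in>e ` {1..m}. \<bar>d $ j\<bar>)"
    by (rule vec_move_mass_to_coordinate[where d = d])
  show ?thesis
  proof (rule that)
    show "(\<Sum>j\<in>UNIV. w $ j) = 0" "\<forall>i\<in>{1..m}. w $ e i = 0" using w(1,3) tangent by auto
    have "e i \<notin> e ` {1..m}" "e i \<noteq> e K" if "i \<in> {m+1..K-1}" for i
      using that \<open>m < K\<close> inj_onD[OF inj, of i] by fastforce+
    then show "\<forall>i\<in>{m+1..K-1}. w $ e i = d $ e i" using w(2) by blast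
    have "(\<Sum>j\<in>e ` {1..m}. \<bar>d $ j\<bar>) = (\<Sum>i=1..m. d $ e i)"
      using active \<open>m < K\<close> by (subst sum.reindex) (auto intro: inj_on_subset[OF inj])
    then show "norm (d - w) \<le> 2 * (\<Sum>i=1..m. d $ e i)" using w(4) by simp
  qed
qed

lemma KKT_quadratic_model_decrease:
  fixes f :: "(real^'n) \<Rightarrow>\<^sub>L real" and B :: "(real^'n) \<Rightarrow>\<^sub>L ((real^'n) \<Rightarrow>\<^sub>L real)"
    and e :: "nat \<Rightarrow> 'n" and K m :: nat
  assumes e: "bij_betw e {1..K} UNIV" and "m < K"
    and \<theta>: "\<theta> \<in> prob_simplex" and th_simplex: "\<theta>s \<in> prob_simplex"
    and th_zero: "\<forall>i\<in>{1..m}. \<theta>s $ e i = 0"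
    and active: "\<forall>i\<in>{1..m}. f (axis (e i) 1) = - lam i + \<mu>"
    and inactive: "\<forall>i\<in>{m+1..K}. f (axis (e i) 1) = \<mu>"
    and lam: "\<forall>i\<in>{1..m}. lmin \<le> lam i"
    and neg: "\<forall>v. (\<Sum>j\<in>UNIV. v $ j) = 0 \<and> (\<forall>i\<in>{1..m}. v $ e i = 0) \<longrightarrow> B v v \<le> - \<kappa> * (norm v)\<^sup>2"
    and "\<kappa> \<ge> 0" and "norm B \<le> M" and small: "4 * M * (1 + 3 * real m) * norm (\<theta> - \<theta>s) \<le> lmin"
  shows "f (\<theta> - \<theta>s) + 1/2 * B (\<theta> - \<theta>s) (\<theta> - \<theta>s)
           \<le> - lmin / 2 * (\<Sum>i=1..m. \<theta> $ e i) - \<kappa> / 2 * (\<Sum>i=m+1..K-1. (\<theta> $ e i - \<theta>s $ e i)\<^sup>2)"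
proof -
  define d where "d = \<theta> - \<theta>s"
  define s where "s = (\<Sum>i=1..m. \<theta> $ e i)"
  have tangent: "(\<Sum>j\<in>UNIV. d $ j) = 0"
    using \<theta> th_simplex by (simp add: d_def prob_simplex_def sum_subtractf)
  have d_active: "d $ e i = \<theta> $ e i" "d $ e i \<ge> 0" if "i \<in> {1..m}" for i
    using th_zero that \<theta> by (auto simp: d_def prob_simplex_def)
  have "s \<ge> 0" unfolding s_def using d_active by (auto intro: sum_nonneg)
  obtain w where w: "(\<Sum>j\<in>UNIV. w $ j) = 0" "\<forall>i\<in>{1..m}. w $ e i = 0"
    "\<forall>i\<in>{m+1..K-1}. w $ e i = d $ e i" "norm (d - w) \<le> 2 * s"
    using tangent_split_active_coordinates[OF e \<open>m < K\<close> tangent] d_active by (auto simp: s_def)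
  have "lmin * s = (\<Sum>i=1..m. lmin * d $ e i)" using d_active by (simp add: s_def sum_distrib_left)
  also have "\<dots> \<le> (\<Sum>i=1..m. lam i * d $ e i)"
    using lam d_active by (intro sum_mono mult_right_mono) auto
  also have "\<dots> = - f d"
    using KKT_gradient_apply_tangent[OF e _ active inactive tangent] \<open>m < K\<close> by simp
  finally have linear: "f d \<le> - lmin * s" by simp
  have "s \<le> (\<Sum>i=1..m. norm d)" unfolding s_def
    using d_active component_le_norm_cart[of d] by (intro sum_mono) (metis abs_le_D1)
  then have "s \<le> real m * norm d" by simp
  then have "B d d \<le> - \<kappa> * (norm w)\<^sup>2 + 4 * M * (1 + 3 * real m) * norm d * s"
    using neg w(1,2,4) \<open>norm B \<le> M\<close> by (intro blinfun_quadratic_le_near_negative_vector) auto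
  also have "\<dots> \<le> - \<kappa> * (norm w)\<^sup>2 + lmin * s"
    using small \<open>s \<ge> 0\<close> by (simp add: d_def mult_right_mono)
  finally have quadratic: "B d d \<le> - \<kappa> * (norm w)\<^sup>2 + lmin * s" .
  have "inj_on e {m+1..K-1}" using bij_betw_imp_inj_on[OF e] by (rule inj_on_subset) auto
  then have "(\<Sum>i=m+1..K-1. (\<theta> $ e i - \<theta>s $ e i)\<^sup>2) = (\<Sum>j\<in>e ` {m+1..K-1}. (w $ j)\<^sup>2)"
    using w(3) by (simp add: sum.reindex d_def)
  also have "\<dots> \<le> (norm w)\<^sup>2" by (rule sum_nth_squares_le_norm_squared)
  finally have "\<kappa> / 2 * (\<Sum>i=m+1..K-1. (\<theta> $ e i - \<theta>s $ e i)\<^sup>2) \<le> \<kappa> / 2 * (norm w)\<^sup>2"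
    using \<open>\<kappa> \<ge> 0\<close> by (intro mult_left_mono) auto
  then show ?thesis using linear quadratic unfolding d_def s_def by linarith
qed

lemma critical_Hessian_negative_near:
  fixes D2f :: "real^'n \<Rightarrow> ((real^'n) \<Rightarrow>\<^sub>L ((real^'n) \<Rightarrow>\<^sub>L real))" and e :: "nat \<Rightarrow> 'n" and m :: nat
  assumes "isCont D2f \<theta>s"
    and neg: "\<forall>d. d \<noteq> 0 \<and> (\<Sum>j\<in>UNIV. d $ j) = 0 \<and> (\<forall>i\<in>{1..m}. d $ e i = 0)
                  \<longrightarrow> D2f \<theta>s d d < 0"
  obtains \<kappa> r M where "\<kappa> > 0" "r > 0" "\<forall>p. dist p \<theta>s < r \<longrightarrow> norm (D2f p) \<le> M \<and>
    (\<forall>v. (\<Sum>j\<in>UNIV. v $ j) = 0 \<and> (\<forall>i\<in>{1..m}. v $ e i = 0) \<longrightarrow> D2f p v v \<le> - \<kappa> * (norm v)\<^sup>2)"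
proof -
  define S where "S = {v::real^'n. (\<Sum>j\<in>UNIV. v $ j) = 0 \<and> (\<forall>i\<in>{1..m}. v $ e i = 0)}"
  have "subspace S"
    unfolding subspace_def S_def by (auto simp: sum.distrib sum_distrib_left[symmetric])
  moreover have "D2f \<theta>s v v < 0" if "v \<in> S" "v \<noteq> 0" for v
    using neg that by (auto simp: S_def)
  ultimately obtain \<kappa> where "\<kappa> > 0" "\<forall>v\<in>S. D2f \<theta>s v v \<le> - \<kappa> * (norm v)\<^sup>2"
    by (rule subspace_negative_definite_uniform)
  with \<open>isCont D2f \<theta>s\<close> obtain r where "r > 0" and r: "\<forall>p. dist p \<theta>s < r \<longrightarrow>
      (\<forall>v\<in>S. D2f p v v \<le> - (\<kappa> / 2) * (norm v)\<^sup>2) \<and> norm (D2f p) \<le> norm (D2f \<theta>s) + \<kappa> / 2"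
    by (metis negative_definite_near)
  show thesis
    using \<open>\<kappa> > 0\<close> \<open>r > 0\<close> r by (intro that[of "\<kappa> / 2" r "norm (D2f \<theta>s) + \<kappa> / 2"]) (auto simp: S_def)
qed

lemma KKT_point_local_upper_bound:
  fixes H :: "real^'n \<Rightarrow> real" and \<theta>s :: "real^'n" and e :: "nat \<Rightarrow> 'n" and K m :: nat
  assumes e: "bij_betw e {1..K} UNIV" and "m < K"
    and th_simplex: "\<theta>s \<in> prob_simplex" and th_zero: "\<forall>i\<in>{1..m}. \<theta>s $ e i = 0"
    and U: "open U" "\<theta>s \<in> U" and C2: "C2_with U H Df D2f"
    and lam: "\<forall>i\<in>{1..m}. lam i > 0"
    and active: "\<forall>i\<in>{1..m}. Df \<theta>s (axis (e i) 1) = - lam i + \<mu>"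
    and inactive: "\<forall>i\<in>{m+1..K}. Df \<theta>s (axis (e i) 1) = \<mu>"
    and neg: "\<forall>d. d \<noteq> 0 \<and> (\<Sum>j\<in>UNIV. d $ j) = 0 \<and> (\<forall>i\<in>{1..m}. d $ e i = 0)
                  \<longrightarrow> D2f \<theta>s d d < 0"
  obtains r a where "r > 0" "a > 0"
    "\<forall>\<theta>\<in>prob_simplex. dist \<theta> \<theta>s < r \<longrightarrow>
       H \<theta> \<le> H \<theta>s - a * ((\<Sum>i=1..m. \<theta> $ e i) + (\<Sum>i=m+1..K-1. (\<theta> $ e i - \<theta>s $ e i)\<^sup>2))"
proof -
  have "isCont D2f \<theta>s"
    using C2 U continuous_on_eq_continuous_at unfolding C2_with_def by blast
  then obtain \<kappa> r2 M where "\<kappa> > 0" "r2 > 0" and hessian: "\<forall>p. dist p \<theta>s < r2 \<longrightarrow> norm (D2f p) \<le> M \<and>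
      (\<forall>v. (\<Sum>j\<in>UNIV. v $ j) = 0 \<and> (\<forall>i\<in>{1..m}. v $ e i = 0) \<longrightarrow> D2f p v v \<le> - \<kappa> * (norm v)\<^sup>2)"
    using neg by (rule critical_Hessian_negative_near)
  obtain r1 where "r1 > 0" "ball \<theta>s r1 \<subseteq> U" using U open_contains_ball by blast
  \<comment> \<open>The 1 keeps the minimum defined when m = 0.\<close>
  define lmin where "lmin = Min (insert 1 (lam ` {1..m}))"
  have lmin: "lmin > 0" "\<forall>i\<in>{1..m}. lmin \<le> lam i"
    unfolding lmin_def using lam by (simp add: Min_gr_iff, intro ballI Min_le) auto
  define N where "N = 4 * M * (1 + 3 * real m)"
  have "norm (D2f \<theta>s) \<le> M" using hessian \<open>r2 > 0\<close> by simp
  then have "M \<ge> 0" using norm_ge_zero order_trans by blast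
  then have "N \<ge> 0" by (simp add: N_def)
  define r where "r = min (min r1 r2) (lmin / (N + 1))"
  have "r > 0" using \<open>r1 > 0\<close> \<open>r2 > 0\<close> lmin(1) \<open>N \<ge> 0\<close> by (simp add: r_def)
  have "H \<theta> \<le> H \<theta>s - min (lmin / 2) (\<kappa> / 2) *
      ((\<Sum>i=1..m. \<theta> $ e i) + (\<Sum>i=m+1..K-1. (\<theta> $ e i - \<theta>s $ e i)\<^sup>2))"
    if \<theta>: "\<theta> \<in> prob_simplex" "dist \<theta> \<theta>s < r" for \<theta>
  proof -
    define d where "d = \<theta> - \<theta>s"
    have near: "dist (\<theta>s + t *\<^sub>R d) \<theta>s < r" if "t \<in> {0..1}" for t
      using \<theta>(2) that mult_left_le_one_le[of "norm d" t] by (simp add: d_def dist_norm)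
    have "\<theta>s + t *\<^sub>R d \<in> U" if "t \<in> {0..1}" for t
      using near[OF that] \<open>ball \<theta>s r1 \<subseteq> U\<close> by (auto simp: r_def dist_commute)
    then obtain t where t: "t \<in> {0..1}"
      "H (\<theta>s + d) = H \<theta>s + Df \<theta>s d + 1/2 * D2f (\<theta>s + t *\<^sub>R d) d d"
      by (rule C2_with_Taylor2[OF C2])
    have "dist (\<theta>s + t *\<^sub>R d) \<theta>s < r2" using near[OF t(1)] by (simp add: r_def)
    then have p_norm: "norm (D2f (\<theta>s + t *\<^sub>R d)) \<le> M"
      and p_neg: "\<forall>v. (\<Sum>j\<in>UNIV. v $ j) = 0 \<and> (\<forall>i\<in>{1..m}. v $ e i = 0)
                 \<longrightarrow> D2f (\<theta>s + t *\<^sub>R d) v v \<le> - \<kappa> * (norm v)\<^sup>2"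
      using hessian by auto
    have "N * norm d \<le> N * (lmin / (N + 1))"
      using \<theta>(2) \<open>N \<ge> 0\<close> by (intro mult_left_mono) (auto simp: r_def d_def dist_norm)
    also have "\<dots> \<le> lmin" using \<open>N \<ge> 0\<close> lmin(1) by (simp add: field_simps)
    finally have d_small: "4 * M * (1 + 3 * real m) * norm (\<theta> - \<theta>s) \<le> lmin"
      by (simp add: N_def d_def)
    from t(2) have "H \<theta> \<le> H \<theta>s - lmin / 2 * (\<Sum>i=1..m. \<theta> $ e i)
        - \<kappa> / 2 * (\<Sum>i=m+1..K-1. (\<theta> $ e i - \<theta>s $ e i)\<^sup>2)"
      using KKT_quadratic_model_decrease[OF e \<open>m < K\<close> \<theta>(1) th_simplex th_zero active inactive
          lmin(2) p_neg _ p_norm d_small] \<open>\<kappa> > 0\<close> by (simp add: d_def)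
    moreover have "min (lmin / 2) (\<kappa> / 2) * ((\<Sum>i=1..m. \<theta> $ e i) + (\<Sum>i=m+1..K-1. (\<theta> $ e i - \<theta>s $ e i)\<^sup>2))
        \<le> lmin / 2 * (\<Sum>i=1..m. \<theta> $ e i) + \<kappa> / 2 * (\<Sum>i=m+1..K-1. (\<theta> $ e i - \<theta>s $ e i)\<^sup>2)"
      using \<theta>(1) by (intro min_mult_add_le sum_nonneg) (auto simp: prob_simplex_def)
    ultimately show ?thesis by linarith
  qed
  then show thesis using \<open>r > 0\<close> lmin(1) \<open>\<kappa> > 0\<close> by (intro that[of r "min (lmin / 2) (\<kappa> / 2)"]) auto
qed

theorem lemma2:
  fixes H :: "real^'n \<Rightarrow> real" and \<theta>s :: "real^'n"
    and e :: "nat \<Rightarrow> 'n" and K m :: nat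
  assumes K: "CARD('n) = K" "K \<ge> 2"
    and e: "bij_betw e {1..K} UNIV"
    and th_simplex: "\<theta>s \<in> prob_simplex"
    and th_zero: "\<forall>i\<in>{1..m}. \<theta>s $ e i = 0"
    and th_pos: "\<forall>i\<in>{m+1..K}. \<theta>s $ e i > 0"
    and A1: "\<forall>\<theta>\<in>prob_simplex. \<theta> \<noteq> \<theta>s \<longrightarrow> H \<theta> < H \<theta>s"
    and A2_cont: "continuous_on prob_simplex H"
    and A2_C2: "\<exists>U Df D2f. open U \<and> \<theta>s \<in> U \<and> C2_with U H Df D2f \<and>
        (\<exists>lam \<mu>.
           (\<forall>i\<in>{1..m}. lam i > 0) \<and>
           (\<forall>i\<in>{1..m}. blinfun_apply (Df \<theta>s) (axis (e i) 1) = - lam i + \<mu>) \<and>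
           (\<forall>i\<in>{m+1..K}. blinfun_apply (Df \<theta>s) (axis (e i) 1) = \<mu>)) \<and>
        (\<forall>d::(real^'n).  d \<noteq> 0 \<and> (\<Sum>j\<in>UNIV. d $ j) = 0 \<and> (\<forall>i\<in>{1..m}. d $ e i = 0)
           \<longrightarrow> blinfun_apply (blinfun_apply (D2f \<theta>s) d) d < 0)"
  shows "\<exists>c1>0. \<exists>c2>0. \<forall>y :: nat \<Rightarrow> real.
           (\<forall>i\<in>{1..K-1}. y i \<ge> 0) \<and> (\<Sum>i=1..K-1. y i) \<le> 1 \<longrightarrow>
           H (Tmap e K y) \<le> H \<theta>s - c1 * (\<Sum>i=1..m. \<bar>y i - \<theta>s $ e i\<bar>)
                               - c2 * (\<Sum>i=m+1..K-1. \<bar>y i - \<theta>s $ e i\<bar>^2)"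
proof -
  have "m < K" using prob_simplex_zero_prefix_less[OF e th_simplex th_zero] .
  obtain U Df D2f lam \<mu> where U: "open U" "\<theta>s \<in> U" and C2: "C2_with U H Df D2f"
    and lam: "\<forall>i\<in>{1..m}. lam i > 0"
    and active: "\<forall>i\<in>{1..m}. Df \<theta>s (axis (e i) 1) = - lam i + \<mu>"
    and inactive: "\<forall>i\<in>{m+1..K}. Df \<theta>s (axis (e i) 1) = \<mu>"
    and neg: "\<forall>d. d \<noteq> 0 \<and> (\<Sum>j\<in>UNIV. d $ j) = 0 \<and> (\<forall>i\<in>{1..m}. d $ e i = 0)
                  \<longrightarrow> D2f \<theta>s d d < 0"
    using A2_C2 by blast
  define P where "P \<theta> = (\<Sum>i=1..m. \<theta> $ e i) + (\<Sum>i=m+1..K-1. (\<theta> $ e i - \<theta>s $ e i)\<^sup>2)"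
    for \<theta> :: "real^'n"
  obtain r a where "r > 0" "a > 0"
    and "\<forall>\<theta>\<in>prob_simplex. dist \<theta> \<theta>s < r \<longrightarrow> H \<theta> \<le> H \<theta>s - a * P \<theta>"
    unfolding P_def
    by (rule KKT_point_local_upper_bound[OF e \<open>m < K\<close> th_simplex th_zero U C2 lam active inactive neg])
  moreover have "continuous_on prob_simplex P"
    unfolding P_def by (intro continuous_intros)
  moreover have "0 \<le> P \<theta>" if "\<theta> \<in> prob_simplex" for \<theta>
    using that by (auto simp: P_def prob_simplex_def intro!: add_nonneg_nonneg sum_nonneg)
  ultimately obtain c where "c > 0" and global: "\<forall>\<theta>\<in>prob_simplex. H \<theta> \<le> H \<theta>s - c * P \<theta>"
    using local_to_global_upper_bound[OF compact_prob_simplex th_simplex A2_cont, of P] A1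
    by metis
  show ?thesis
  proof (intro exI[of _ c] conjI allI impI)
    fix y :: "nat \<Rightarrow> real"
    assume y: "(\<forall>i\<in>{1..K-1}. y i \<ge> 0) \<and> (\<Sum>i=1..K-1. y i) \<le> 1"
    then have "H (Tmap e K y) \<le> H \<theta>s - c * P (Tmap e K y)"
      using global Tmap_in_prob_simplex[OF e] K by simp
    moreover have "P (Tmap e K y) = (\<Sum>i=1..m. \<bar>y i - \<theta>s $ e i\<bar>) + (\<Sum>i=m+1..K-1. \<bar>y i - \<theta>s $ e i\<bar>^2)"
      using y th_zero Tmap_nth[OF e] \<open>m < K\<close> by (auto simp: P_def intro!: sum.cong)
    ultimately show "H (Tmap e K y) \<le> H \<theta>s - c * (\<Sum>i=1..m. \<bar>y i - \<theta>s $ e i\<bar>)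
                                          - c * (\<Sum>i=m+1..K-1. \<bar>y i - \<theta>s $ e i\<bar>^2)"
      by (simp add: distrib_left)
  qed (use \<open>c > 0\<close> in auto)
qed

end
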